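(* Let $\phi\colon\mathbb{N}\to(0,\infty)$ be a non-decreasing function. (1) If $\sum_{n=1}^\infty\frac{1}{\phi(n)}<\infty$, then for Lebesgue almost all $x\in(0,1)$, $\limsup_{n\to\infty}\frac{M_n(x)}{\phi(n)}=0$. (2) If $\sum_{n=1}^\infty\frac{1}{\phi(n)}=\infty$, then for Lebesgue almost all $x\in(0,1)$, $\limsup_{n\to\infty}\frac{M_n(x)}{\phi(n)}=\infty$.
   Context: Signed Engel expansion: define $T\colon[0,1)\to[0,1)$ by: for $k\in\mathbb{N}$, $Tx=\lceil 1/x\rceil x-1$ if $x\in(\frac{1}{2k},\frac{1}{2k-1})$; $Tx=1-\lfloor 1/x\rfloor x$ if $x\in(\frac{1}{2k+1},\frac{1}{2k})$; $Tx=0$ if $x\in\{0\}\cup\{1/n\colon n\ge 2\}$. For $x\in(0,1)$, $d_1(x)=\lceil 1/x\rceil$ if $x\in[\frac{1}{2k},\frac{1}{2k-1})$ for some $k\in\mathbb{N}$, and $d_1(x)=\lfloor 1/x\rfloor$ if $x\in[\frac{1}{2k+1},\frac{1}{2k})$ for some $k\in\mathbb{N}$; $d_{n+1}(x)=d_1(T^nx)$. For irrational $x\in(0,1)$, $R_1(x)=d_1(x)$, $R_n(x)=d_n(x)/d_{n-1}(x)$ for $n\ge2$, and $M_n(x)=\max\{R_k(x)\colon 1\le k\le n\}$. *)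

theory Defs
  imports "HOL-Analysis.Analysis"
begin

text \<open>The signed Engel map T on [0,1) (values outside [0,1) are irrelevant).\<close>
definition sE_T :: "real \<Rightarrow> real" where
  "sE_T x =
    (if x = 0 \<or> (\<exists>n::nat. n \<ge> 2 \<and> x = 1 / real n) then 0
     else if (\<exists>k::nat. k \<ge> 1 \<and> 1 / (2 * real k) < x \<and> x < 1 / (2 * real k - 1))
       then real_of_int \<lceil>1 / x\<rceil> * x - 1
     else 1 - real_of_int \<lfloor>1 / x\<rfloor> * x)"

definition sE_d1 :: "real \<Rightarrow> int" where
  "sE_d1 x =
    (if \<exists>k::nat. k \<ge> 1 \<and> 1 / (2 * real k) \<le> x \<and> x < 1 / (2 * real k - 1)
     then \<lceil>1 / x\<rceil> else \<lfloor>1 / x\<rfloor>)"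

text \<open>Digits d_n(x), n \<ge> 1: d_(n+1)(x) = d_1(T^n x).  (d_0 is a dummy.)\<close>
definition sE_d :: "nat \<Rightarrow> real \<Rightarrow> int" where
  "sE_d n x = sE_d1 ((sE_T ^^ (n - 1)) x)"

definition sE_R :: "nat \<Rightarrow> real \<Rightarrow> real" where
  "sE_R n x = (if n \<le> 1 then real_of_int (sE_d 1 x)
               else real_of_int (sE_d n x) / real_of_int (sE_d (n - 1) x))"

definition sE_M :: "nat \<Rightarrow> real \<Rightarrow> real" where
  "sE_M n x = Max {sE_R k x | k. 1 \<le> k \<and> k \<le> n}"

end

theory Submission
  imports Defs
begin

text \<open>On the branch where the integer part of 1/x equals m, the signed Engel map T is affine with
  slope plus or minus the first digit d, and it maps the branch onto an interval (0, 1/j) that is,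
  up to a null set, a union of branches. Hence a bound B on the average of a density G over every
  branch passes from G to G o T, and therefore holds for G o T^n uniformly in n.

  On a branch with digit d the next digit exceeds r d only if T x < 1/(r d - 1), which has
  relative measure at most 3/r; and the next digit is at most r d only if T x avoids a
  neighbourhood of 0 of relative measure at least 1/(3 r). If the series of 1/phi(n) converges,
  the first estimate and Borel-Cantelli give R_(n+2) <= phi(n+2)/(m+1) eventually, for every m,
  so that M_n = o(phi(n)) because phi tends to infinity. If it diverges, iterating the second
  estimate shows that R_(n+2) <= c phi(n+2) for all n >= N only on a set of measure at most
  the product of the factors 1 - 1/(3 c phi(n+2)), which is 0.\<close>

lemma prod_one_minus_le_exp_neg_sum:
  fixes p :: "'a \<Rightarrow> real"
  assumes "finite A" "\<And>i. i \<in> A \<Longrightarrow> 0 \<le> p i \<and> p i \<le> 1"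
  shows "(\<Prod>i\<in>A. 1 - p i) \<le> exp (- (\<Sum>i\<in>A. p i))"
proof -
  have "(\<Prod>i\<in>A. 1 - p i) \<le> (\<Prod>i\<in>A. exp (- p i))"
    using assms(2) exp_ge_add_one_self[of "- p _"] by (intro prod_mono) auto
  also have "\<dots> = exp (- (\<Sum>i\<in>A. p i))"
    using assms(1) by (simp add: exp_sum sum_negf[symmetric])
  finally show ?thesis .
qed

lemma running_Max_div_tendsto_0:
  fixes a \<phi> :: "nat \<Rightarrow> real"
  assumes a: "\<And>k. 0 \<le> a k"
    and \<phi>: "filterlim \<phi> at_top sequentially"
    and mono: "\<And>m n. 1 \<le> m \<Longrightarrow> m \<le> n \<Longrightarrow> \<phi> m \<le> \<phi> n"
    and small: "\<And>\<epsilon>. 0 < \<epsilon> \<Longrightarrow> \<forall>\<^sub>F n in sequentially. a n \<le> \<epsilon> * \<phi> n"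
  shows "(\<lambda>n. Max (a ` {1..n}) / \<phi> n) \<longlonglongrightarrow> 0"
proof (rule order_tendstoI)
  have "\<forall>\<^sub>F n in sequentially. 1 \<le> \<phi> n \<and> 1 \<le> n"
    using \<phi> by (simp add: filterlim_at_top eventually_conj eventually_ge_at_top)
  then show "\<forall>\<^sub>F n in sequentially. y < Max (a ` {1..n}) / \<phi> n" if "y < 0" for y
  proof eventually_elim
    case (elim n)
    have "a 1 \<le> Max (a ` {1..n})" using elim by (intro Max_ge) auto
    then have "0 \<le> Max (a ` {1..n})" using a[of 1] by linarith
    then have "0 \<le> Max (a ` {1..n}) / \<phi> n" using elim by simp
    with that show ?case by linarith
  qed
next
  fix y :: real assume "0 < y"
  then obtain N where N: "\<And>n. N \<le> n \<Longrightarrow> a n \<le> y / 2 * \<phi> n"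
    using small[of "y / 2"] by (auto simp: eventually_sequentially)
  define C where "C = Max (a ` {1..N})"
  have "\<forall>\<^sub>F n in sequentially. max 1 (2 * C / y) \<le> \<phi> n \<and> N \<le> n \<and> 1 \<le> n"
    using \<phi> by (simp add: filterlim_at_top eventually_conj eventually_ge_at_top)
  then show "\<forall>\<^sub>F n in sequentially. Max (a ` {1..n}) / \<phi> n < y"
  proof eventually_elim
    case (elim n)
    have "a k \<le> y / 2 * \<phi> n" if "k \<in> {1..n}" for k
    proof (cases "k \<le> N")
      case True
      then have "a k \<le> C" unfolding C_def using that by (intro Max_ge) auto
      also have "C \<le> y / 2 * \<phi> n" using elim \<open>0 < y\<close> by (simp add: field_simps)
      finally show ?thesis .
    next
      case False
      then have "a k \<le> y / 2 * \<phi> k" using N by simp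
      also have "\<dots> \<le> y / 2 * \<phi> n" using mono[of k n] that \<open>0 < y\<close> by simp
      finally show ?thesis .
    qed
    then have "Max (a ` {1..n}) \<le> y / 2 * \<phi> n"
      using elim by (subst Max_le_iff) auto
    moreover have "y / 2 * \<phi> n < y * \<phi> n" using elim \<open>0 < y\<close> by simp
    ultimately have "Max (a ` {1..n}) < y * \<phi> n" by linarith
    moreover have "0 < \<phi> n" using elim by simp
    ultimately show ?case using pos_divide_less_eq by blast
  qed
qed

lemma limsup_ereal_eq_PInfty:
  fixes f :: "nat \<Rightarrow> real"
  assumes "\<And>C N. \<exists>n\<ge>N. C < f n"
  shows "limsup (\<lambda>n. ereal (f n)) = \<infinity>"
proof (rule ccontr)
  assume "limsup (\<lambda>n. ereal (f n)) \<noteq> \<infinity>"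
  then obtain C :: nat where "limsup (\<lambda>n. ereal (f n)) < ereal (real C)"
    using less_PInf_Ex_of_nat by blast
  then have "\<forall>\<^sub>F n in sequentially. ereal (f n) < ereal (real C)"
    by (rule Limsup_lessD)
  then have "\<forall>\<^sub>F n in sequentially. \<not> real C < f n"
    by (rule eventually_mono) simp
  then obtain N where "\<And>n. N \<le> n \<Longrightarrow> \<not> real C < f n"
    by (auto simp: eventually_sequentially)
  with assms[where C = "real C" and N = N] show False by blast
qed

lemma filterlim_at_top_if_summable_inverse:
  fixes f :: "nat \<Rightarrow> real"
  assumes "\<And>n. 0 < f (Suc n)" and "summable (\<lambda>n. 1 / f (Suc n))"
  shows "filterlim f at_top sequentially"
proof -
  have "filterlim (\<lambda>n. inverse (1 / f (Suc n))) at_top sequentially"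
    using summable_LIMSEQ_zero[OF assms(2)] assms(1) by (intro filterlim_inverse_at_top) auto
  then show ?thesis by (simp add: filterlim_sequentially_Suc)
qed

section \<open>Branches of the signed Engel map\<close>

lemma borel_measurable_sE_T [measurable]: "sE_T \<in> borel_measurable borel"
  unfolding sE_T_def by measurable

lemma borel_measurable_sE_d1 [measurable]: "(\<lambda>x. real_of_int (sE_d1 x)) \<in> borel_measurable borel"
  unfolding sE_d1_def by measurable

(* On it sE_T is
   affine with slope plus or minus branch_digit m, the first digit, and maps it onto the interval
   {0<..<1 / branch_image_den m}; these two numbers are m and m + 1 in some order. *)
definition branch :: "nat \<Rightarrow> real set" where
  "branch m = {1 / (real m + 1)<..<1 / real m}"

definition branch_digit :: "nat \<Rightarrow> nat" where
  "branch_digit m = m + m mod 2"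

definition branch_image_den :: "nat \<Rightarrow> nat" where
  "branch_image_den m = m + 1 - m mod 2"

lemma branch_digit_bounds: "m \<le> branch_digit m" "branch_digit m \<le> m + 1"
  by (simp_all add: branch_digit_def)

lemma two_le_branch_digit: "1 \<le> m \<Longrightarrow> 2 \<le> branch_digit m"
  by (cases "m = 1") (simp_all add: branch_digit_def)

lemma branch_image_den_bounds: "m \<le> branch_image_den m" "branch_image_den m \<le> m + 1"
  by (simp_all add: branch_image_den_def)

lemma branch_digit_mult_image_den: "branch_digit m * branch_image_den m = m * (m + 1)"
  by (cases "even m") (simp_all add: branch_digit_def branch_image_den_def odd_iff_mod_2_eq_one)

lemma sets_branch [measurable]: "branch m \<in> sets borel"
  by (simp add: branch_def)

lemma branch_0 [simp]: "branch 0 = {}"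
  by (simp add: branch_def)

lemma branch_recip_bounds:
  assumes "z \<in> branch m"
  shows "0 < z" "real m < 1 / z" "1 / z < real m + 1"
proof -
  have lo: "1 / (real m + 1) < z" and hi: "z < 1 / real m"
    using assms by (simp_all add: branch_def)
  have "0 < 1 / (real m + 1)" by simp
  with lo show z: "0 < z" by linarith
  then have "m \<noteq> 0" using hi by (cases "m = 0") auto
  then show "real m < 1 / z" using hi z by (simp add: less_divide_eq mult.commute)
  show "1 / z < real m + 1" using lo z by (simp add: divide_less_eq mult.commute)
qed

lemma floor_recip_branch: "z \<in> branch m \<Longrightarrow> \<lfloor>1 / z\<rfloor> = int m"
  using branch_recip_bounds[of z m] by (simp add: floor_eq_iff)

lemma ceiling_recip_branch: "z \<in> branch m \<Longrightarrow> \<lceil>1 / z\<rceil> = int m + 1"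
  using branch_recip_bounds[of z m] by (simp add: ceiling_eq_iff)

lemma recip_branch_neq_of_nat: "z \<in> branch m \<Longrightarrow> 1 / z \<noteq> real n"
  using floor_recip_branch[of z m] branch_recip_bounds[of z m]
  by (metis floor_of_nat of_int_of_nat_eq less_irrefl)

lemma disjoint_family_branch: "disjoint_family branch"
  unfolding disjoint_family_on_def
proof (intro ballI impI)
  fix m n :: nat assume "m \<noteq> n"
  then show "branch m \<inter> branch n = {}"
    using floor_recip_branch[of _ m] floor_recip_branch[of _ n] by fastforce
qed

lemma mem_branch_floor_recip:
  assumes z: "0 < z" "z < 1" "z \<notin> range (\<lambda>n. 1 / real n)"
  shows "z \<in> branch (nat \<lfloor>1 / z\<rfloor>)"
proof -
  define m where "m = nat \<lfloor>1 / z\<rfloor>"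
  have "1 < 1 / z" using z by simp
  then have m: "real m \<le> 1 / z" "1 / z < real m + 1" "1 \<le> m"
    unfolding m_def by linarith+
  have "z \<noteq> 1 / real m" using z(3) by blast
  then have "1 / z \<noteq> real m" by (metis inverse_eq_divide inverse_inverse_eq)
  with m have "real m < 1 / z" by simp
  then have "z < 1 / real m" using z(1) m(3) by (simp add: less_divide_eq mult.commute)
  moreover have "1 / (real m + 1) < z" using m(2) z(1) by (simp add: divide_less_eq mult.commute)
  ultimately show ?thesis by (simp add: branch_def m_def)
qed

lemma branch_subset_interval:
  assumes "j \<le> m" "1 \<le> j"
  shows "branch m \<subseteq> {0<..<1 / real j}"
proof
  fix z assume z: "z \<in> branch m"
  have "z < 1 / real m" using z by (simp add: branch_def)
  also have "1 / real m \<le> 1 / real j" using assms by (intro frac_le) auto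
  finally show "z \<in> {0<..<1 / real j}" using branch_recip_bounds(1)[OF z] by simp
qed

lemma branch_odd_interval_iff:
  assumes z: "z \<in> branch m" and k: "1 \<le> k"
  shows "(1 / (2 * real k) \<le> z \<and> z < 1 / (2 * real k - 1)) \<longleftrightarrow> m = 2 * k - 1"
    and "(1 / (2 * real k) < z \<and> z < 1 / (2 * real k - 1)) \<longleftrightarrow> m = 2 * k - 1"
proof -
  have "0 < z" using branch_recip_bounds(1)[OF z] .
  moreover have "0 < 2 * real k - 1" using k by simp
  ultimately have le: "(1 / (2 * real k) \<le> z \<and> z < 1 / (2 * real k - 1)) \<longleftrightarrow>
      2 * real k - 1 < 1 / z \<and> 1 / z \<le> 2 * real k"
    and less: "(1 / (2 * real k) < z \<and> z < 1 / (2 * real k - 1)) \<longleftrightarrow>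
      2 * real k - 1 < 1 / z \<and> 1 / z < 2 * real k"
    using k by (auto simp: field_simps)
  have "1 / z \<noteq> real (2 * k)" by (rule recip_branch_neq_of_nat[OF z])
  then have "(2 * real k - 1 < 1 / z \<and> 1 / z < 2 * real k) \<longleftrightarrow> \<lceil>1 / z\<rceil> = int (2 * k)"
    by (auto simp: ceiling_eq_iff)
  moreover have "(2 * real k - 1 < 1 / z \<and> 1 / z \<le> 2 * real k) \<longleftrightarrow> \<lceil>1 / z\<rceil> = int (2 * k)"
    by (simp add: ceiling_eq_iff)
  moreover have "\<lceil>1 / z\<rceil> = int (2 * k) \<longleftrightarrow> m = 2 * k - 1"
    using ceiling_recip_branch[OF z] k by linarith
  ultimately show "(1 / (2 * real k) \<le> z \<and> z < 1 / (2 * real k - 1)) \<longleftrightarrow> m = 2 * k - 1"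
    and "(1 / (2 * real k) < z \<and> z < 1 / (2 * real k - 1)) \<longleftrightarrow> m = 2 * k - 1"
    using le less by simp_all
qed

lemma odd_iff_ex_double_minus_one: "1 \<le> m \<Longrightarrow> odd m \<longleftrightarrow> (\<exists>k::nat. 1 \<le> k \<and> m = 2 * k - 1)"
  by presburger

lemma sE_d1_branch:
  assumes z: "z \<in> branch m"
  shows "sE_d1 z = int (branch_digit m)"
proof -
  have m: "1 \<le> m" using z by (cases m) auto
  have "(\<exists>k::nat. 1 \<le> k \<and> 1 / (2 * real k) \<le> z \<and> z < 1 / (2 * real k - 1)) \<longleftrightarrow> odd m"
    using branch_odd_interval_iff(1)[OF z] odd_iff_ex_double_minus_one[OF m] by auto
  then show ?thesis
    using ceiling_recip_branch[OF z] floor_recip_branch[OF z]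
    by (simp add: sE_d1_def branch_digit_def odd_iff_mod_2_eq_one)
qed

lemma sE_T_branch:
  assumes z: "z \<in> branch m"
  shows "sE_T z = (if odd m then real (branch_digit m) * z - 1 else 1 - real (branch_digit m) * z)"
proof -
  have m: "1 \<le> m" using z by (cases m) auto
  have "z \<noteq> 0" using branch_recip_bounds(1)[OF z] by simp
  moreover have "z \<noteq> 1 / real n" for n
    using recip_branch_neq_of_nat[OF z, of n] by auto
  moreover have "(\<exists>k::nat. 1 \<le> k \<and> 1 / (2 * real k) < z \<and> z < 1 / (2 * real k - 1)) \<longleftrightarrow> odd m"
    using branch_odd_interval_iff(2)[OF z] odd_iff_ex_double_minus_one[OF m] by auto
  ultimately show ?thesis
    using ceiling_recip_branch[OF z] floor_recip_branch[OF z]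
    by (simp add: sE_T_def branch_digit_def odd_iff_mod_2_eq_one)
qed

lemma emeasure_branch:
  "emeasure lborel (branch m) = ennreal (1 / (real (branch_digit m) * real (branch_image_den m)))"
proof (cases "m = 0")
  case False
  have "real (branch_digit m) * real (branch_image_den m) = real m * (real m + 1)"
    using branch_digit_mult_image_den[of m] by (metis of_nat_1 of_nat_add of_nat_mult)
  moreover have "1 / real m - 1 / (real m + 1) = 1 / (real m * (real m + 1))"
    using False by (simp add: field_simps)
  moreover have "1 / (real m + 1) \<le> 1 / real m"
    using False by (simp add: frac_le)
  ultimately show ?thesis by (simp add: branch_def)
qed (simp add: branch_digit_def)

lemma branch_affine_image_iff:
  fixes z :: real
  assumes m: "1 \<le> m"
  defines "d \<equiv> real (branch_digit m)"
  shows "(if odd m then d * z - 1 else 1 - d * z) \<in> {0<..<1 / real (branch_image_den m)}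
           \<longleftrightarrow> z \<in> branch m"
proof (cases "odd m")
  case True
  then have d: "d = real m + 1" and den: "branch_image_den m = m"
    by (simp_all add: d_def branch_digit_def branch_image_den_def odd_iff_mod_2_eq_one)
  have "d * (1 / real m) = 1 / real m + 1"
    using m by (simp add: d field_simps)
  then have "d * z - 1 < 1 / real m \<longleftrightarrow> d * z < d * (1 / real m)"
    by linarith
  also have "\<dots> \<longleftrightarrow> z < 1 / real m"
    by (rule mult_less_cancel_left_pos) (simp add: d)
  finally show ?thesis
    using True den by (auto simp: branch_def d field_simps)
next
  case False
  then have d: "d = real m" and den: "branch_image_den m = m + 1"
    by (simp_all add: d_def branch_digit_def branch_image_den_def even_iff_mod_2_eq_zero)
  have "d * (1 / (real m + 1)) = 1 - 1 / (real m + 1)"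
    by (simp add: d field_simps)
  then have "1 - d * z < 1 / (real m + 1) \<longleftrightarrow> d * (1 / (real m + 1)) < d * z"
    by linarith
  also have "\<dots> \<longleftrightarrow> 1 / (real m + 1) < z"
    by (rule mult_less_cancel_left_pos) (use m in \<open>simp add: d\<close>)
  finally show ?thesis
    using False den m by (auto simp: branch_def d field_simps)
qed

lemma nn_integral_branch_sE_T:
  assumes [measurable]: "G \<in> borel_measurable borel"
  shows "(\<integral>\<^sup>+z\<in>branch m. G (sE_T z) \<partial>lborel) =
    ennreal (1 / real (branch_digit m)) * (\<integral>\<^sup>+w\<in>{0<..<1 / real (branch_image_den m)}. G w \<partial>lborel)"
proof (cases "m = 0")
  case False
  define d where "d = real (branch_digit m)"
  define \<sigma> :: real where "\<sigma> = (if odd m then 1 else -1)"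
  let ?I = "{0<..<1 / real (branch_image_den m)}"
  have d: "1 \<le> d" using False branch_digit_bounds(1)[of m] by (simp add: d_def)
  have affine: "- \<sigma> + \<sigma> * d * z = (if odd m then d * z - 1 else 1 - d * z)" for z
    by (simp add: \<sigma>_def)
  have "G (- \<sigma> + \<sigma> * d * z) * indicator ?I (- \<sigma> + \<sigma> * d * z) = G (sE_T z) * indicator (branch m) z" for z
    unfolding affine unfolding d_def
    using branch_affine_image_iff[of m z] sE_T_branch[of z m] False by (simp add: indicator_def)
  moreover have "\<bar>\<sigma> * d\<bar> = d" "\<sigma> * d \<noteq> 0" using d by (auto simp: \<sigma>_def)
  ultimately have "(\<integral>\<^sup>+w\<in>?I. G w \<partial>lborel) = ennreal d * (\<integral>\<^sup>+z\<in>branch m. G (sE_T z) \<partial>lborel)"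
    using nn_integral_real_affine[of "\<lambda>w. G w * indicator ?I w" "\<sigma> * d" "- \<sigma>"]
    by (simp add: mult.assoc)
  moreover have "ennreal (1 / d) * ennreal d = 1"
    using d by (simp flip: ennreal_mult)
  ultimately show ?thesis
    by (simp flip: d_def add: mult.assoc[symmetric])
qed (simp add: branch_digit_def)

lemma set_nn_integral_interval_eq_branches:
  assumes [measurable]: "G \<in> borel_measurable borel" and j: "1 \<le> j"
  shows "(\<integral>\<^sup>+w\<in>{0<..<1 / real j}. G w \<partial>lborel) = (\<integral>\<^sup>+w\<in>(\<Union>m\<in>{j..}. branch m). G w \<partial>lborel)"
proof (rule nn_integral_cong_AE)
  have "AE w in lborel. w \<notin> range (\<lambda>n. 1 / real n)"
    by (intro AE_not_in countable_imp_null_set_lborel) simp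
  then show "AE w in lborel. G w * indicator {0<..<1 / real j} w = G w * indicator (\<Union>m\<in>{j..}. branch m) w"
  proof eventually_elim
    case (elim w)
    have in_branch: "w \<in> (\<Union>m\<in>{j..}. branch m)" if w: "0 < w" "w < 1 / real j"
    proof -
      have "1 / real j \<le> 1" using j by simp
      with w have "w < 1" by linarith
      then have "w \<in> branch (nat \<lfloor>1 / w\<rfloor>)" using mem_branch_floor_recip w(1) elim by blast
      moreover have "real j < 1 / w" using w j by (simp add: field_simps)
      then have "j \<le> nat \<lfloor>1 / w\<rfloor>" by linarith
      ultimately show ?thesis by auto
    qed
    moreover have "w \<in> {0<..<1 / real j}" if "w \<in> (\<Union>m\<in>{j..}. branch m)"
      using that branch_subset_interval[OF _ j] by (meson UN_E atLeast_iff subsetD)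
    ultimately have "w \<in> {0<..<1 / real j} \<longleftrightarrow> w \<in> (\<Union>m\<in>{j..}. branch m)"
      by auto
    then show ?case by (simp add: indicator_def)
  qed
qed

lemma emeasure_branches_between_le:
  assumes j: "1 \<le> j"
  shows "emeasure lborel (\<Union>m\<in>{j..K}. branch m) \<le> ennreal (1 / real j - 1 / (real K + 1))"
proof (cases "j \<le> K")
  case True
  have "(\<Union>m\<in>{j..K}. branch m) \<subseteq> {1 / (real K + 1)<..<1 / real j}"
  proof (intro subsetI)
    fix z assume "z \<in> (\<Union>m\<in>{j..K}. branch m)"
    then obtain m where m: "m \<in> {j..K}" and z: "z \<in> branch m" by blast
    have "1 / (real K + 1) \<le> 1 / (real m + 1)" using m by (intro frac_le) auto
    also have "\<dots> < z" using z by (simp add: branch_def)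
    finally have "1 / (real K + 1) < z" .
    moreover have "z < 1 / real j" using branch_subset_interval[of j m] m j z by auto
    ultimately show "z \<in> {1 / (real K + 1)<..<1 / real j}" by simp
  qed
  then have "emeasure lborel (\<Union>m\<in>{j..K}. branch m) \<le> emeasure lborel {1 / (real K + 1)<..<1 / real j}"
    by (intro emeasure_mono) auto
  also have "\<dots> = ennreal (1 / real j - 1 / (real K + 1))"
    using True j by (intro emeasure_lborel_Ioo frac_le) auto
  finally show ?thesis .
qed simp

lemma emeasure_branches_upto_le:
  assumes r: "1 \<le> r" and j: "1 \<le> j" and K: "real K \<le> r * (real j + 1)"
  shows "emeasure lborel (\<Union>m\<in>{j..K}. branch m) \<le> ennreal ((1 - 1 / (3 * r)) * (1 / real j))"
proof -
  have "r \<le> r * real j" using r j by simp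
  moreover have "real K \<le> r * real j + r" using K by (simp add: distrib_left)
  ultimately have "real K + 1 \<le> 3 * (r * real j)" using r by linarith
  then have "1 / (3 * r * real j) \<le> 1 / (real K + 1)" using r j by (intro frac_le) auto
  then have "1 / real j - 1 / (real K + 1) \<le> (1 - 1 / (3 * r)) * (1 / real j)"
    using r j by (simp add: algebra_simps)
  with emeasure_branches_between_le[OF j, of K] show ?thesis
    by (meson ennreal_leI order_trans)
qed

section \<open>Averages over branches\<close>

(* Since sE_T maps each branch affinely onto an initial interval, which is a union of branches up
   to a null set, this bound is inherited by G o sE_T, and hence holds uniformly for all
   G o sE_T ^^ n. *)
definition branch_avg_le :: "ennreal \<Rightarrow> (real \<Rightarrow> ennreal) \<Rightarrow> bool" where
  "branch_avg_le B G \<longleftrightarrow> G \<in> borel_measurable borel \<and>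
     (\<forall>m\<ge>1. (\<integral>\<^sup>+z\<in>branch m. G z \<partial>lborel) \<le> B * emeasure lborel (branch m))"

lemma branch_avg_leI:
  assumes "G \<in> borel_measurable borel"
    and "\<And>m. 1 \<le> m \<Longrightarrow> (\<integral>\<^sup>+z\<in>branch m. G z \<partial>lborel) \<le> B * emeasure lborel (branch m)"
  shows "branch_avg_le B G"
  using assms by (simp add: branch_avg_le_def)

lemma branch_avg_le_measurable [measurable_dest]: "branch_avg_le B G \<Longrightarrow> G \<in> borel_measurable borel"
  by (simp add: branch_avg_le_def)

lemma branch_avg_le_Union:
  assumes G: "branch_avg_le B G"
  shows "(\<integral>\<^sup>+w\<in>(\<Union>m\<in>I. branch m). G w \<partial>lborel) \<le> B * emeasure lborel (\<Union>m\<in>I. branch m)"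
proof -
  define C where "C m = (if m \<in> I then branch m else {})" for m
  have [measurable]: "G \<in> borel_measurable borel" using G by simp
  have C_sets [measurable]: "C m \<in> sets borel" for m by (simp add: C_def)
  have U: "(\<Union>m\<in>I. branch m) = (\<Union>m. C m)" by (auto simp: C_def split: if_splits)
  have "disjoint_family C"
    using disjoint_family_branch by (auto simp: C_def disjoint_family_on_def)
  then have "(\<integral>\<^sup>+w\<in>(\<Union>m. C m). G w \<partial>lborel) = (\<Sum>m. \<integral>\<^sup>+w\<in>C m. G w \<partial>lborel)"
    by (simp add: nn_integral_disjoint_family)
  also have "\<dots> \<le> (\<Sum>m. B * emeasure lborel (C m))"
  proof (intro suminf_le)
    show "(\<integral>\<^sup>+w\<in>C m. G w \<partial>lborel) \<le> B * emeasure lborel (C m)" for m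
    proof (cases "m \<in> I \<and> 1 \<le> m")
      case False
      then have "C m = {}" by (auto simp: C_def not_less_eq_eq)
      then show ?thesis by simp
    qed (use G in \<open>simp add: C_def branch_avg_le_def\<close>)
  qed auto
  also have "\<dots> = B * emeasure lborel (\<Union>m. C m)"
    using suminf_emeasure[of C lborel] C_sets \<open>disjoint_family C\<close>
    by (simp add: ennreal_suminf_cmult image_subset_iff)
  finally show ?thesis unfolding U .
qed

lemma branch_avg_le_initial_interval:
  assumes G: "branch_avg_le B G" and j: "1 \<le> j"
  shows "(\<integral>\<^sup>+w\<in>{0<..<1 / real j}. G w \<partial>lborel) \<le> B * ennreal (1 / real j)"
proof -
  have "(\<integral>\<^sup>+w\<in>{0<..<1 / real j}. G w \<partial>lborel) = (\<integral>\<^sup>+w\<in>(\<Union>m\<in>{j..}. branch m). G w \<partial>lborel)"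
    using set_nn_integral_interval_eq_branches[OF branch_avg_le_measurable[OF G] j] .
  also have "\<dots> \<le> B * emeasure lborel (\<Union>m\<in>{j..}. branch m)"
    by (rule branch_avg_le_Union[OF G])
  also have "\<dots> \<le> B * emeasure lborel {0<..<1 / real j}"
    using branch_subset_interval[OF _ j] by (intro mult_left_mono emeasure_mono) auto
  also have "emeasure lborel {0<..<1 / real j} = ennreal (1 / real j)"
    by (subst emeasure_lborel_Ioo) auto
  finally show ?thesis .
qed

lemma branch_avg_le_comp_sE_T:
  assumes G: "branch_avg_le B G"
  shows "branch_avg_le B (\<lambda>z. G (sE_T z))"
proof (rule branch_avg_leI)
  have [measurable]: "G \<in> borel_measurable borel" using G by simp
  show "(\<lambda>z. G (sE_T z)) \<in> borel_measurable borel" by measurable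
  fix m :: nat assume m: "1 \<le> m"
  define d where "d = real (branch_digit m)"
  define t where "t = real (branch_image_den m)"
  have t: "1 \<le> branch_image_den m" using branch_image_den_bounds(1)[of m] m by simp
  have "(\<integral>\<^sup>+z\<in>branch m. G (sE_T z) \<partial>lborel) = ennreal (1 / d) * (\<integral>\<^sup>+w\<in>{0<..<1 / t}. G w \<partial>lborel)"
    unfolding d_def t_def by (rule nn_integral_branch_sE_T) measurable
  also have "\<dots> \<le> ennreal (1 / d) * (B * ennreal (1 / t))"
    unfolding t_def by (intro mult_left_mono branch_avg_le_initial_interval[OF G t]) auto
  also have "\<dots> = B * ennreal (1 / (d * t))"
  proof -
    have "ennreal (1 / (d * t)) = ennreal (1 / d) * ennreal (1 / t)"
      by (simp add: d_def t_def ennreal_mult[symmetric])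
    then show ?thesis by (simp add: mult_ac)
  qed
  finally show "(\<integral>\<^sup>+z\<in>branch m. G (sE_T z) \<partial>lborel) \<le> B * emeasure lborel (branch m)"
    by (simp add: emeasure_branch d_def t_def)
qed

lemma branch_avg_le_comp_funpow_sE_T:
  "branch_avg_le B G \<Longrightarrow> branch_avg_le B (\<lambda>z. G ((sE_T ^^ n) z))"
proof (induction n)
  case (Suc n)
  then show ?case
    using branch_avg_le_comp_sE_T[OF Suc.IH] by (simp add: funpow_Suc_right del: funpow.simps)
qed simp

lemma nn_integral_unit_interval_orbit_le:
  assumes "branch_avg_le B G"
  shows "(\<integral>\<^sup>+x\<in>{0<..<1}. G ((sE_T ^^ n) x) \<partial>lborel) \<le> B"
  using branch_avg_le_initial_interval[OF branch_avg_le_comp_funpow_sE_T[OF assms], of 1] by simp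

lemma less_recip_if_sE_d1_gt:
  assumes w: "0 < w" and c: "1 < c" "c < real_of_int (sE_d1 w)"
  shows "w < 1 / (c - 1)"
proof -
  have "real_of_int (sE_d1 w) < 1 / w + 1"
    using w unfolding sE_d1_def by (auto; linarith)
  with c have "c - 1 < 1 / w" by linarith
  then have "(c - 1) * w < 1" using w by (simp add: less_divide_eq)
  then show ?thesis using c by (simp add: less_divide_eq mult.commute)
qed

lemma branch_avg_le_digit_jump:
  assumes r: "1 \<le> r"
  shows "branch_avg_le (ennreal (3 / r))
    (\<lambda>z. if r * real_of_int (sE_d1 z) < real_of_int (sE_d1 (sE_T z)) then 1 else 0)"
proof (rule branch_avg_leI)
  show "(\<lambda>z. if r * real_of_int (sE_d1 z) < real_of_int (sE_d1 (sE_T z)) then 1 else 0 :: ennreal)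
    \<in> borel_measurable borel" by measurable
  fix m :: nat assume m: "1 \<le> m"
  let ?H = "\<lambda>z. if r * real_of_int (sE_d1 z) < real_of_int (sE_d1 (sE_T z)) then 1 else 0 :: ennreal"
  define d where "d = real (branch_digit m)"
  define t where "t = real (branch_image_den m)"
  have d: "2 \<le> d" "t \<le> d + 1" and t: "1 \<le> t"
    using m two_le_branch_digit[OF m] branch_digit_bounds[of m] branch_image_den_bounds[of m]
    by (auto simp: d_def t_def)
  have rd: "2 \<le> r * d" using mult_mono[OF r d(1)] r by simp
  let ?P = "\<lambda>w. if r * d < real_of_int (sE_d1 w) then 1 else 0 :: ennreal"
  have "(\<integral>\<^sup>+z\<in>branch m. ?H z \<partial>lborel) = (\<integral>\<^sup>+z\<in>branch m. ?P (sE_T z) \<partial>lborel)"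
    by (intro nn_integral_cong) (simp add: sE_d1_branch d_def split: split_indicator)
  also have "\<dots> = ennreal (1 / d) * (\<integral>\<^sup>+w\<in>{0<..<1 / t}. ?P w \<partial>lborel)"
    unfolding d_def t_def by (rule nn_integral_branch_sE_T) measurable
  also have "\<dots> \<le> ennreal (1 / d) * (\<integral>\<^sup>+w. indicator {0<..<1 / (r * d - 1)} w \<partial>lborel)"
    using less_recip_if_sE_d1_gt[of _ "r * d"] rd
    by (intro mult_left_mono nn_integral_mono) (auto simp: indicator_def)
  also have "\<dots> = ennreal (1 / d * (1 / (r * d - 1)))"
    using d rd by (simp add: ennreal_mult[symmetric])
  also have "\<dots> \<le> ennreal (3 / r * (1 / (d * t)))"
  proof (rule ennreal_leI)
    have "r * t \<le> r * d + r" using r d mult_left_mono[of t "d + 1" r] by (simp add: distrib_left)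
    moreover have "2 * r \<le> r * d" using r d mult_left_mono[of 2 d r] by (simp add: mult.commute)
    ultimately have "r * t \<le> 3 * (r * d - 1)" using r by (smt (verit))
    then have "d * (r * t) \<le> d * (3 * (r * d - 1))" using d by (intro mult_left_mono) auto
    moreover have "0 < r * d - 1" using rd by simp
    ultimately show "1 / d * (1 / (r * d - 1)) \<le> 3 / r * (1 / (d * t))"
      using r d t by (simp add: field_simps)
  qed
  also have "\<dots> = ennreal (3 / r) * emeasure lborel (branch m)"
    using r t by (subst ennreal_mult) (auto simp: emeasure_branch d_def t_def)
  finally show "(\<integral>\<^sup>+z\<in>branch m. ?H z \<partial>lborel) \<le> ennreal (3 / r) * emeasure lborel (branch m)" .
qed

(* A next digit of at most r d forces sE_T z into a branch of index at most r d, i.e. away from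
   a neighbourhood of 0 that takes up a fraction 1 / (3 r) of the image interval. *)
lemma branch_avg_le_no_jump:
  assumes r: "1 \<le> r" and G: "branch_avg_le B G"
  shows "branch_avg_le (B * ennreal (1 - 1 / (3 * r)))
    (\<lambda>z. if real_of_int (sE_d1 (sE_T z)) \<le> r * real_of_int (sE_d1 z) then G (sE_T z) else 0)"
proof (rule branch_avg_leI)
  have [measurable]: "G \<in> borel_measurable borel" using G by simp
  show "(\<lambda>z. if real_of_int (sE_d1 (sE_T z)) \<le> r * real_of_int (sE_d1 z) then G (sE_T z) else 0)
    \<in> borel_measurable borel" by measurable
  fix m :: nat assume m: "1 \<le> m"
  let ?H = "\<lambda>z. if real_of_int (sE_d1 (sE_T z)) \<le> r * real_of_int (sE_d1 z) then G (sE_T z) else 0"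
  define d where "d = real (branch_digit m)"
  define j where "j = branch_image_den m"
  define K where "K = nat \<lfloor>r * d\<rfloor>"
  let ?P = "\<lambda>w. if real_of_int (sE_d1 w) \<le> r * d then G w else 0"
  have j: "1 \<le> j" "d \<le> real j + 1"
    using m branch_digit_bounds[of m] branch_image_den_bounds[of m] by (auto simp: d_def j_def)
  have "(\<integral>\<^sup>+z\<in>branch m. ?H z \<partial>lborel) = (\<integral>\<^sup>+z\<in>branch m. ?P (sE_T z) \<partial>lborel)"
    by (intro nn_integral_cong) (simp add: sE_d1_branch d_def split: split_indicator)
  also have "\<dots> = ennreal (1 / d) * (\<integral>\<^sup>+w\<in>{0<..<1 / real j}. ?P w \<partial>lborel)"
    unfolding d_def j_def by (rule nn_integral_branch_sE_T) measurable
  also have "\<dots> = ennreal (1 / d) * (\<integral>\<^sup>+w\<in>(\<Union>m'\<in>{j..}. branch m'). ?P w \<partial>lborel)"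
    by (subst set_nn_integral_interval_eq_branches[OF _ j(1)]) simp_all
  also have "\<dots> \<le> ennreal (1 / d) * (\<integral>\<^sup>+w\<in>(\<Union>m'\<in>{j..K}. branch m'). G w \<partial>lborel)"
  proof (intro mult_left_mono nn_integral_mono)
    fix w
    show "?P w * indicator (\<Union>m'\<in>{j..}. branch m') w \<le> G w * indicator (\<Union>m'\<in>{j..K}. branch m') w"
    proof (cases "w \<in> (\<Union>m'\<in>{j..}. branch m') \<and> real_of_int (sE_d1 w) \<le> r * d")
      case True
      then obtain m' where m': "j \<le> m'" "w \<in> branch m'" by auto
      have "real m' \<le> r * d"
        using True sE_d1_branch[OF m'(2)] branch_digit_bounds(1)[of m'] by simp
      then have "m' \<le> K" unfolding K_def by (simp add: le_nat_iff le_floor_iff)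
      with m' True show ?thesis by (auto simp: indicator_def)
    qed auto
  qed simp
  also have "\<dots> \<le> ennreal (1 / d) * (B * emeasure lborel (\<Union>m'\<in>{j..K}. branch m'))"
    by (intro mult_left_mono branch_avg_le_Union[OF G]) simp
  also have "\<dots> \<le> ennreal (1 / d) * (B * ennreal ((1 - 1 / (3 * r)) * (1 / real j)))"
  proof (intro mult_left_mono emeasure_branches_upto_le[OF r j(1)])
    have "0 \<le> r * d" using r by (simp add: d_def)
    then have "real K \<le> r * d" unfolding K_def by (simp add: of_nat_nat)
    also have "\<dots> \<le> r * (real j + 1)" using r j by (intro mult_left_mono) auto
    finally show "real K \<le> r * (real j + 1)" .
  qed auto
  also have "\<dots> = B * ennreal (1 - 1 / (3 * r)) * emeasure lborel (branch m)"
    using r j by (simp add: emeasure_branch d_def j_def ennreal_mult[symmetric] mult_ac)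
  finally show "(\<integral>\<^sup>+z\<in>branch m. ?H z \<partial>lborel) \<le> B * ennreal (1 - 1 / (3 * r)) * emeasure lborel (branch m)" .
qed

definition digit_ratios_le :: "(nat \<Rightarrow> real) \<Rightarrow> nat \<Rightarrow> real \<Rightarrow> bool" where
  "digit_ratios_le r L z \<longleftrightarrow>
     (\<forall>i<L. real_of_int (sE_d1 ((sE_T ^^ Suc i) z)) \<le> r i * real_of_int (sE_d1 ((sE_T ^^ i) z)))"

lemma digit_ratios_le_Suc:
  "digit_ratios_le r (Suc L) z \<longleftrightarrow>
     real_of_int (sE_d1 (sE_T z)) \<le> r 0 * real_of_int (sE_d1 z) \<and> digit_ratios_le (\<lambda>i. r (Suc i)) L (sE_T z)"
  unfolding digit_ratios_le_def
  by (auto simp: less_Suc_eq_0_disj funpow_Suc_right funpow_0 simp del: funpow.simps)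

lemma branch_avg_le_digit_ratios_le:
  "(\<And>i. 1 \<le> r i) \<Longrightarrow>
    branch_avg_le (\<Prod>i<L. ennreal (1 - 1 / (3 * r i))) (indicator {z. digit_ratios_le r L z})"
proof (induction L arbitrary: r)
  case 0
  show ?case by (rule branch_avg_leI) (simp_all add: digit_ratios_le_def)
next
  case (Suc L)
  have "indicator {z. digit_ratios_le r (Suc L) z} =
    (\<lambda>z. if real_of_int (sE_d1 (sE_T z)) \<le> r 0 * real_of_int (sE_d1 z)
          then indicator {z. digit_ratios_le (\<lambda>i. r (Suc i)) L z} (sE_T z) else 0 :: ennreal)"
    by (auto simp: digit_ratios_le_Suc fun_eq_iff split: split_indicator)
  moreover have "(\<Prod>i<Suc L. ennreal (1 - 1 / (3 * r i))) =
      (\<Prod>i<L. ennreal (1 - 1 / (3 * r (Suc i)))) * ennreal (1 - 1 / (3 * r 0))"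
    unfolding prod.lessThan_Suc_shift by (simp add: mult.commute)
  ultimately show ?case
    using branch_avg_le_no_jump[OF Suc.prems Suc.IH] Suc.prems by simp
qed

section \<open>Digit ratios along almost every orbit\<close>

lemma emeasure_digit_jump_le:
  assumes r: "0 < r"
  shows "emeasure lborel {x \<in> {0<..<1}. r * real_of_int (sE_d1 ((sE_T ^^ n) x)) < real_of_int (sE_d1 ((sE_T ^^ Suc n) x))}
    \<le> ennreal (3 / r)"
    (is "emeasure lborel ?A \<le> _")
proof (cases "1 \<le> r")
  case True
  have [measurable]: "?A \<in> sets lborel" by measurable
  have "emeasure lborel ?A = (\<integral>\<^sup>+x. indicator ?A x \<partial>lborel)"
    by simp
  also have "\<dots> = (\<integral>\<^sup>+x\<in>{0<..<1}.
      (if r * real_of_int (sE_d1 ((sE_T ^^ n) x)) < real_of_int (sE_d1 (sE_T ((sE_T ^^ n) x))) then 1 else 0) \<partial>lborel)"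
    by (intro nn_integral_cong) (simp split: split_indicator)
  also have "\<dots> \<le> ennreal (3 / r)"
    using nn_integral_unit_interval_orbit_le[OF branch_avg_le_digit_jump[OF True]] .
  finally show ?thesis .
next
  case False
  have "emeasure lborel ?A \<le> emeasure lborel {0<..<1::real}"
    by (intro emeasure_mono) auto
  also have "\<dots> \<le> ennreal (3 / r)"
    using False r by (simp add: ennreal_1[symmetric] ennreal_le_iff del: ennreal_1)
  finally show ?thesis .
qed

lemma emeasure_digit_ratios_eventually_le:
  assumes r: "\<And>n. 1 \<le> r n"
  shows "emeasure lborel {x \<in> {0<..<1}. \<forall>n\<ge>N.
      real_of_int (sE_d1 ((sE_T ^^ Suc n) x)) \<le> r n * real_of_int (sE_d1 ((sE_T ^^ n) x))}
    \<le> ennreal (exp (- (\<Sum>i<L. 1 / (3 * r (N + i)))))"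
    (is "emeasure lborel ?S \<le> _")
proof -
  let ?r = "\<lambda>i. r (N + i)"
  have [measurable]: "?S \<in> sets lborel" by measurable
  have p: "0 \<le> 1 / (3 * r i) \<and> 1 / (3 * r i) \<le> 1" for i
    using r[of i] by (simp add: field_simps)
  have "emeasure lborel ?S = (\<integral>\<^sup>+x. indicator ?S x \<partial>lborel)"
    by simp
  also have "\<dots> \<le> (\<integral>\<^sup>+x\<in>{0<..<1}. indicator {z. digit_ratios_le ?r L z} ((sE_T ^^ N) x) \<partial>lborel)"
  proof (intro nn_integral_mono)
    fix x
    have "digit_ratios_le ?r L ((sE_T ^^ N) x)" if "x \<in> ?S"
      unfolding digit_ratios_le_def
    proof (intro allI impI)
      fix i
      have "(sE_T ^^ Suc i) ((sE_T ^^ N) x) = (sE_T ^^ Suc (i + N)) x"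
        and "(sE_T ^^ i) ((sE_T ^^ N) x) = (sE_T ^^ (i + N)) x"
        by (simp_all add: funpow_add)
      then show "real_of_int (sE_d1 ((sE_T ^^ Suc i) ((sE_T ^^ N) x)))
          \<le> ?r i * real_of_int (sE_d1 ((sE_T ^^ i) ((sE_T ^^ N) x)))"
        using that by (simp add: add.commute)
    qed
    then show "indicator ?S x \<le> (indicator {z. digit_ratios_le ?r L z} ((sE_T ^^ N) x) * indicator {0<..<1} x :: ennreal)"
      by (auto split: split_indicator)
  qed
  also have "\<dots> \<le> (\<Prod>i<L. ennreal (1 - 1 / (3 * ?r i)))"
    using r by (intro nn_integral_unit_interval_orbit_le branch_avg_le_digit_ratios_le)
  also have "\<dots> = ennreal (\<Prod>i<L. 1 - 1 / (3 * ?r i))"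
    using p by (simp add: prod_ennreal)
  also have "\<dots> \<le> ennreal (exp (- (\<Sum>i<L. 1 / (3 * ?r i))))"
    using p by (intro ennreal_leI prod_one_minus_le_exp_neg_sum) auto
  finally show ?thesis .
qed

lemma null_sets_digit_ratios_eventually_le:
  assumes r: "\<And>n. 1 \<le> r n" and diverges: "\<not> summable (\<lambda>n. 1 / r n)"
  shows "{x \<in> {0<..<1}. \<forall>n\<ge>N.
      real_of_int (sE_d1 ((sE_T ^^ Suc n) x)) \<le> r n * real_of_int (sE_d1 ((sE_T ^^ n) x))} \<in> null_sets lborel"
    (is "?S \<in> null_sets lborel")
proof -
  let ?p = "\<lambda>i. 1 / (3 * r (N + i))"
  have p_nonneg: "0 \<le> ?p i" for i using r[of "N + i"] by simp
  have "\<not> summable ?p"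
  proof
    assume "summable ?p"
    then have "summable (\<lambda>i. 3 * ?p i)" by (rule summable_mult)
    then have "summable (\<lambda>i. 1 / r (i + N))" using r by (simp add: add.commute)
    with diverges show False using summable_iff_shift[of "\<lambda>n. 1 / r n" N] by simp
  qed
  then have unbounded: "\<exists>L. M < (\<Sum>i<L. ?p i)" for M
    using summableI_nonneg_bounded[of ?p M] p_nonneg by (meson not_le)
  have "emeasure lborel ?S \<le> 0"
  proof (rule ennreal_le_epsilon)
    fix e :: real assume "0 < e"
    obtain L where "- ln e < (\<Sum>i<L. ?p i)" using unbounded by blast
    then have "exp (- (\<Sum>i<L. ?p i)) < exp (ln e)" by simp
    then have exp_le: "exp (- (\<Sum>i<L. ?p i)) \<le> e" using \<open>0 < e\<close> by simp
    have "emeasure lborel ?S \<le> ennreal (exp (- (\<Sum>i<L. ?p i)))"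
      by (rule emeasure_digit_ratios_eventually_le[OF r])
    also have "\<dots> \<le> ennreal e"
      using exp_le by (rule ennreal_leI)
    finally show "emeasure lborel ?S \<le> 0 + ennreal e" by simp
  qed
  moreover have "?S \<in> sets lborel" by measurable
  ultimately show ?thesis by (simp add: null_sets_def)
qed

lemma AE_eventually_digit_ratio_le:
  assumes r: "\<And>n. 0 < r n" and converges: "summable (\<lambda>n. 1 / r n)"
  shows "AE x in lborel. x \<in> {0<..<1} \<longrightarrow> (\<forall>\<^sub>F n in sequentially.
      real_of_int (sE_d1 ((sE_T ^^ Suc n) x)) \<le> r n * real_of_int (sE_d1 ((sE_T ^^ n) x)))"
proof -
  define A where "A n = {x \<in> {0<..<1}.
    r n * real_of_int (sE_d1 ((sE_T ^^ n) x)) < real_of_int (sE_d1 ((sE_T ^^ Suc n) x))}" for n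
  have A_sets [measurable]: "A n \<in> sets lborel" for n unfolding A_def by measurable
  have A_le: "emeasure lborel (A n) \<le> ennreal (3 / r n)" for n
    unfolding A_def using emeasure_digit_jump_le[OF r] .
  have "AE x in lborel. \<forall>\<^sub>F n in sequentially. x \<in> space lborel - A n"
  proof (rule borel_cantelli_AE1)
    show "emeasure lborel (A n) < \<infinity>" for n using A_le[of n] by (simp add: le_less_trans)
    have "measure lborel (A n) \<le> 3 * (1 / r n)" for n
      using A_le[of n] r[of n] by (simp add: measure_def enn2real_leI)
    then show "summable (\<lambda>n. measure lborel (A n))"
      by (intro summable_comparison_test'[OF summable_mult[OF converges, of 3]]) auto
  qed (rule A_sets)
  then show ?thesis
  proof eventually_elim
    case (elim x)
    show ?case
      using elim by (auto simp: A_def not_less elim!: eventually_mono)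
  qed
qed

lemma AE_frequently_digit_ratio_gt:
  assumes r: "\<And>n. 1 \<le> r n" and diverges: "\<not> summable (\<lambda>n. 1 / r n)"
  shows "AE x in lborel. x \<in> {0<..<1} \<longrightarrow> (\<exists>\<^sub>F n in sequentially.
      r n * real_of_int (sE_d1 ((sE_T ^^ n) x)) < real_of_int (sE_d1 ((sE_T ^^ Suc n) x)))"
proof -
  have "AE x in lborel. \<forall>N. x \<notin> {x \<in> {0<..<1}. \<forall>n\<ge>N.
      real_of_int (sE_d1 ((sE_T ^^ Suc n) x)) \<le> r n * real_of_int (sE_d1 ((sE_T ^^ n) x))}"
    using null_sets_digit_ratios_eventually_le[OF r diverges]
    by (intro AE_all_countable[THEN iffD2] allI AE_not_in)
  then show ?thesis
  proof eventually_elim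
    case (elim x)
    show ?case
      unfolding frequently_sequentially using elim by (auto simp: not_le)
  qed
qed

section \<open>Irrational points and the maximal ratio\<close>

lemma mem_branch_floor_recip_irrational:
  assumes "x \<in> {0<..<1} - \<rat>"
  shows "x \<in> branch (nat \<lfloor>1 / x\<rfloor>)"
proof (rule mem_branch_floor_recip)
  show "x \<notin> range (\<lambda>n. 1 / real n)" using assms by auto
qed (use assms in auto)

lemma sE_T_irrational:
  assumes x: "x \<in> {0<..<1} - \<rat>"
  shows "sE_T x \<in> {0<..<1} - \<rat>"
proof -
  define m where "m = nat \<lfloor>1 / x\<rfloor>"
  define d where "d = real (branch_digit m)"
  have xm: "x \<in> branch m" using mem_branch_floor_recip_irrational[OF x] by (simp add: m_def)
  then have m: "1 \<le> m" by (cases m) auto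
  have T: "sE_T x = (if odd m then d * x - 1 else 1 - d * x)"
    using sE_T_branch[OF xm] by (simp add: d_def)
  have "sE_T x \<in> {0<..<1 / real (branch_image_den m)}"
    using branch_affine_image_iff[OF m, of x] xm unfolding T d_def by blast
  moreover have "1 / real (branch_image_den m) \<le> 1"
    using m branch_image_den_bounds(1)[of m] by simp
  moreover have "sE_T x \<notin> \<rat>"
  proof
    assume "sE_T x \<in> \<rat>"
    then have rat: "(if odd m then (sE_T x + 1) / d else (1 - sE_T x) / d) \<in> \<rat>"
      by (simp add: d_def Rats_divide Rats_add Rats_diff)
    have "0 < d" using two_le_branch_digit[OF m] by (simp add: d_def)
    then have x_eq: "x = (if odd m then (sE_T x + 1) / d else (1 - sE_T x) / d)"
      using T by (auto simp: field_simps)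
    have "x \<in> \<rat>" by (subst x_eq) (fact rat)
    with x show False by simp
  qed
  ultimately show ?thesis by auto
qed

lemma funpow_sE_T_irrational: "x \<in> {0<..<1} - \<rat> \<Longrightarrow> (sE_T ^^ n) x \<in> {0<..<1} - \<rat>"
  by (induction n) (simp_all add: sE_T_irrational del: Diff_iff)

lemma sE_d1_irrational_ge_2:
  assumes "x \<in> {0<..<1} - \<rat>"
  shows "2 \<le> sE_d1 x"
proof -
  define m where "m = nat \<lfloor>1 / x\<rfloor>"
  have xm: "x \<in> branch m" using mem_branch_floor_recip_irrational[OF assms] by (simp add: m_def)
  then have "1 \<le> m" by (cases m) auto
  then show ?thesis using sE_d1_branch[OF xm] two_le_branch_digit by fastforce
qed

lemma sE_R_Suc_Suc:
  "sE_R (Suc (Suc n)) x = real_of_int (sE_d1 ((sE_T ^^ Suc n) x)) / real_of_int (sE_d1 ((sE_T ^^ n) x))"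
  by (simp add: sE_R_def sE_d_def)

lemma sE_R_irrational_pos:
  assumes "x \<in> {0<..<1} - \<rat>"
  shows "0 < sE_R k x"
proof -
  have "0 < real_of_int (sE_d1 ((sE_T ^^ n) x))" for n
    using sE_d1_irrational_ge_2[OF funpow_sE_T_irrational[OF assms], of n] by simp
  from this[of 0] this[of "k - 1"] this[of "k - 2"] show ?thesis
    by (simp add: sE_R_def sE_d_def numeral_2_eq_2)
qed

lemma sE_R_Suc_Suc_le_iff:
  assumes "x \<in> {0<..<1} - \<rat>"
  shows "sE_R (Suc (Suc n)) x \<le> c \<longleftrightarrow>
    real_of_int (sE_d1 ((sE_T ^^ Suc n) x)) \<le> c * real_of_int (sE_d1 ((sE_T ^^ n) x))"
proof -
  have "2 \<le> sE_d1 ((sE_T ^^ n) x)"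
    using sE_d1_irrational_ge_2[OF funpow_sE_T_irrational[OF assms]] .
  then have "0 < real_of_int (sE_d1 ((sE_T ^^ n) x))" by simp
  then show ?thesis by (simp add: sE_R_Suc_Suc pos_divide_le_eq)
qed

lemma sE_M_eq_Max: "sE_M n x = Max ((\<lambda>k. sE_R k x) ` {1..n})"
  unfolding sE_M_def by (rule arg_cong[where f = Max]) auto

lemma limsup_Max_ratio_eq_0:
  fixes \<phi> :: "nat \<Rightarrow> real"
  assumes x: "x \<in> {0<..<1} - \<rat>"
    and \<phi>: "filterlim \<phi> at_top sequentially"
    and mono: "\<And>m n. 1 \<le> m \<Longrightarrow> m \<le> n \<Longrightarrow> \<phi> m \<le> \<phi> n"
    and small: "\<And>\<epsilon>. 0 < \<epsilon> \<Longrightarrow> \<forall>\<^sub>F n in sequentially. sE_R (Suc (Suc n)) x \<le> \<epsilon> * \<phi> (Suc (Suc n))"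
  shows "limsup (\<lambda>n. ereal (sE_M n x / \<phi> n)) = 0"
proof -
  have "(\<lambda>n. sE_M n x / \<phi> n) \<longlonglongrightarrow> 0"
    unfolding sE_M_eq_Max
  proof (rule running_Max_div_tendsto_0[OF _ \<phi> mono])
    show "0 \<le> sE_R k x" for k using sE_R_irrational_pos[OF x] less_imp_le by blast
    show "\<forall>\<^sub>F n in sequentially. sE_R n x \<le> \<epsilon> * \<phi> n" if "0 < \<epsilon>" for \<epsilon>
      by (rule eventually_sequentially_Suc[THEN iffD1, OF eventually_sequentially_Suc[THEN iffD1]])
        (rule small[OF that])
  qed
  then have "(\<lambda>n. ereal (sE_M n x / \<phi> n)) \<longlonglongrightarrow> ereal 0" by (rule tendsto_ereal)
  then show ?thesis by (simp add: lim_imp_Limsup zero_ereal_def)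
qed

lemma limsup_Max_ratio_eq_infinity:
  fixes \<phi> :: "nat \<Rightarrow> real"
  assumes pos: "\<And>n. n \<ge> 1 \<Longrightarrow> \<phi> n > 0"
    and large: "\<And>C. \<exists>\<^sub>F n in sequentially. C * \<phi> (Suc (Suc n)) < sE_R (Suc (Suc n)) x"
  shows "limsup (\<lambda>n. ereal (sE_M n x / \<phi> n)) = \<infinity>"
proof (rule limsup_ereal_eq_PInfty)
  fix C :: real and N :: nat
  obtain n where n: "N \<le> n" and R: "C * \<phi> (Suc (Suc n)) < sE_R (Suc (Suc n)) x"
    using large[of C] by (auto simp: frequently_sequentially)
  have "sE_R (Suc (Suc n)) x \<le> sE_M (Suc (Suc n)) x"
    unfolding sE_M_eq_Max by (intro Max_ge) auto
  with R have "C * \<phi> (Suc (Suc n)) < sE_M (Suc (Suc n)) x" by linarith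
  then have "C < sE_M (Suc (Suc n)) x / \<phi> (Suc (Suc n))"
    using pos[of "Suc (Suc n)"] by (simp add: less_divide_eq)
  with n show "\<exists>n'\<ge>N. C < sE_M n' x / \<phi> n'"
    by (intro exI[of _ "Suc (Suc n)"]) auto
qed

lemma AE_digit_ratio_eventually_small:
  fixes \<phi> :: "nat \<Rightarrow> real"
  assumes pos: "\<And>n. n \<ge> 1 \<Longrightarrow> \<phi> n > 0" and converges: "summable (\<lambda>n. 1 / \<phi> (Suc n))"
  shows "AE x in lborel. x \<in> {0<..<1} - \<rat> \<longrightarrow>
    (\<forall>\<epsilon>>0. \<forall>\<^sub>F n in sequentially. sE_R (Suc (Suc n)) x \<le> \<epsilon> * \<phi> (Suc (Suc n)))"
proof -
  define r where "r m n = \<phi> (Suc (Suc n)) / real (Suc m)" for m n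
  have summable: "summable (\<lambda>n. 1 / \<phi> (Suc (Suc n)))"
    using converges by (subst summable_Suc_iff)
  have "summable (\<lambda>n. 1 / r m n)" for m
    using summable_mult[OF summable, of "real (Suc m)"] by (simp add: r_def)
  moreover have "0 < r m n" for m n using pos by (simp add: r_def)
  ultimately have "AE x in lborel. \<forall>m. x \<in> {0<..<1} \<longrightarrow> (\<forall>\<^sub>F n in sequentially.
      real_of_int (sE_d1 ((sE_T ^^ Suc n) x)) \<le> r m n * real_of_int (sE_d1 ((sE_T ^^ n) x)))"
    by (intro AE_all_countable[THEN iffD2] allI AE_eventually_digit_ratio_le)
  then show ?thesis
  proof (eventually_elim, intro impI allI)
    fix x and \<epsilon> :: real
    assume elim: "\<forall>m. x \<in> {0<..<1} \<longrightarrow> (\<forall>\<^sub>F n in sequentially.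
      real_of_int (sE_d1 ((sE_T ^^ Suc n) x)) \<le> r m n * real_of_int (sE_d1 ((sE_T ^^ n) x)))"
      and x: "x \<in> {0<..<1} - \<rat>"
    assume "0 < \<epsilon>"
    then obtain m where m: "inverse (real (Suc m)) < \<epsilon>" using reals_Archimedean by blast
    have "\<forall>\<^sub>F n in sequentially.
        real_of_int (sE_d1 ((sE_T ^^ Suc n) x)) \<le> r m n * real_of_int (sE_d1 ((sE_T ^^ n) x))"
      using elim x by simp
    then show "\<forall>\<^sub>F n in sequentially. sE_R (Suc (Suc n)) x \<le> \<epsilon> * \<phi> (Suc (Suc n))"
    proof (rule eventually_mono)
      fix n
      assume "real_of_int (sE_d1 ((sE_T ^^ Suc n) x)) \<le> r m n * real_of_int (sE_d1 ((sE_T ^^ n) x))"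
      then have "sE_R (Suc (Suc n)) x \<le> r m n" using sE_R_Suc_Suc_le_iff[OF x] by blast
      also have "r m n \<le> \<epsilon> * \<phi> (Suc (Suc n))"
        using m pos[of "Suc (Suc n)"] by (simp add: r_def divide_inverse mult.commute mult_left_mono)
      finally show "sE_R (Suc (Suc n)) x \<le> \<epsilon> * \<phi> (Suc (Suc n))" .
    qed
  qed
qed

lemma AE_digit_ratio_frequently_large:
  fixes \<phi> :: "nat \<Rightarrow> real"
  assumes pos: "\<And>n. n \<ge> 1 \<Longrightarrow> \<phi> n > 0"
    and mono: "\<And>m n. 1 \<le> m \<Longrightarrow> m \<le> n \<Longrightarrow> \<phi> m \<le> \<phi> n"
    and diverges: "\<not> summable (\<lambda>n. 1 / \<phi> (Suc n))"
  shows "AE x in lborel. x \<in> {0<..<1} - \<rat> \<longrightarrow>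
    (\<forall>C. \<exists>\<^sub>F n in sequentially. C * \<phi> (Suc (Suc n)) < sE_R (Suc (Suc n)) x)"
proof -
  define r where "r K n = (real K + 1 / \<phi> 1) * \<phi> (Suc (Suc n))" for K n
  have "1 \<le> r K n" for K n
  proof -
    have "1 = 1 / \<phi> 1 * \<phi> 1" using pos[of 1] by simp
    also have "\<dots> \<le> (real K + 1 / \<phi> 1) * \<phi> (Suc (Suc n))"
      using pos[of 1] mono[of 1 "Suc (Suc n)"] by (intro mult_mono) auto
    finally show ?thesis by (simp add: r_def)
  qed
  moreover have "\<not> summable (\<lambda>n. 1 / r K n)" for K
  proof
    assume "summable (\<lambda>n. 1 / r K n)"
    then have "summable (\<lambda>n. (real K + 1 / \<phi> 1) * (1 / r K n))" by (rule summable_mult)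
    moreover have "0 < real K + 1 / \<phi> 1" using pos[of 1] by (simp add: add_nonneg_pos)
    ultimately have "summable (\<lambda>n. 1 / \<phi> (Suc (Suc n)))" by (simp add: r_def)
    with diverges show False using summable_Suc_iff[of "\<lambda>n. 1 / \<phi> (Suc n)"] by simp
  qed
  ultimately have "AE x in lborel. \<forall>K. x \<in> {0<..<1} \<longrightarrow> (\<exists>\<^sub>F n in sequentially.
      r K n * real_of_int (sE_d1 ((sE_T ^^ n) x)) < real_of_int (sE_d1 ((sE_T ^^ Suc n) x)))"
    by (intro AE_all_countable[THEN iffD2] allI AE_frequently_digit_ratio_gt)
  then show ?thesis
  proof (eventually_elim, intro impI allI)
    fix x C
    assume elim: "\<forall>K. x \<in> {0<..<1} \<longrightarrow> (\<exists>\<^sub>F n in sequentially.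
      r K n * real_of_int (sE_d1 ((sE_T ^^ n) x)) < real_of_int (sE_d1 ((sE_T ^^ Suc n) x)))"
      and x: "x \<in> {0<..<1} - \<rat>"
    obtain K :: nat where "C < real K" using reals_Archimedean2 by blast
    then have C: "C * \<phi> (Suc (Suc n)) \<le> r K n" for n
      using pos[of 1] pos[of "Suc (Suc n)"] by (simp add: r_def distrib_right add_increasing2)
    have "\<exists>\<^sub>F n in sequentially.
        r K n * real_of_int (sE_d1 ((sE_T ^^ n) x)) < real_of_int (sE_d1 ((sE_T ^^ Suc n) x))"
      using elim x by simp
    then show "\<exists>\<^sub>F n in sequentially. C * \<phi> (Suc (Suc n)) < sE_R (Suc (Suc n)) x"
    proof (rule frequently_elim1)
      fix n
      assume "r K n * real_of_int (sE_d1 ((sE_T ^^ n) x)) < real_of_int (sE_d1 ((sE_T ^^ Suc n) x))"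
      then have "r K n < sE_R (Suc (Suc n)) x"
        using sE_R_Suc_Suc_le_iff[OF x, of n "r K n"] by linarith
      with C[of n] show "C * \<phi> (Suc (Suc n)) < sE_R (Suc (Suc n)) x" by linarith
    qed
  qed
qed

theorem corollary1p6:
  fixes \<phi> :: "nat \<Rightarrow> real"
  assumes pos: "\<And>n. n \<ge> 1 \<Longrightarrow> \<phi> n > 0"
    and mono: "\<And>m n. 1 \<le> m \<Longrightarrow> m \<le> n \<Longrightarrow> \<phi> m \<le> \<phi> n"
  shows "(summable (\<lambda>n. 1 / \<phi> (Suc n)) \<longrightarrow>
            (AE x in lborel. x \<in> {0<..<1} \<and> x \<notin> \<rat> \<longrightarrow>
               limsup (\<lambda>n. ereal (sE_M n x / \<phi> n)) = 0))
       \<and> (\<not> summable (\<lambda>n. 1 / \<phi> (Suc n)) \<longrightarrow>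
            (AE x in lborel. x \<in> {0<..<1} \<and> x \<notin> \<rat> \<longrightarrow>
               limsup (\<lambda>n. ereal (sE_M n x / \<phi> n)) = \<infinity>))"
proof (intro conjI impI)
  assume converges: "summable (\<lambda>n. 1 / \<phi> (Suc n))"
  have \<phi>: "filterlim \<phi> at_top sequentially"
    using pos converges by (intro filterlim_at_top_if_summable_inverse) auto
  have "AE x in lborel. x \<in> {0<..<1} - \<rat> \<longrightarrow>
      (\<forall>\<epsilon>>0. \<forall>\<^sub>F n in sequentially. sE_R (Suc (Suc n)) x \<le> \<epsilon> * \<phi> (Suc (Suc n)))"
    using pos converges by (rule AE_digit_ratio_eventually_small)
  then show "AE x in lborel. x \<in> {0<..<1} \<and> x \<notin> \<rat> \<longrightarrow> limsup (\<lambda>n. ereal (sE_M n x / \<phi> n)) = 0"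
    by eventually_elim (auto intro: limsup_Max_ratio_eq_0[OF _ \<phi> mono])
next
  assume diverges: "\<not> summable (\<lambda>n. 1 / \<phi> (Suc n))"
  have "AE x in lborel. x \<in> {0<..<1} - \<rat> \<longrightarrow>
      (\<forall>C. \<exists>\<^sub>F n in sequentially. C * \<phi> (Suc (Suc n)) < sE_R (Suc (Suc n)) x)"
    using pos mono diverges by (rule AE_digit_ratio_frequently_large)
  then show "AE x in lborel. x \<in> {0<..<1} \<and> x \<notin> \<rat> \<longrightarrow> limsup (\<lambda>n. ereal (sE_M n x / \<phi> n)) = \<infinity>"
    by eventually_elim (auto intro: limsup_Max_ratio_eq_infinity[OF pos])
qed

end
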